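(* Let $G$ be a strongly connected digraph with $N>2$ nodes in which all nodes run the Privacy-Preserving Push-Sum Algorithm described in the context. Let $\mathcal A\subset\mathcal V$ be a set of honest-but-curious nodes and $i\notin\mathcal A$. If $N_i^{out}\cup N_i^{in}\subseteq\mathcal A$, then the initial value $x_i(0)$ can be uniquely inferred by $\mathcal A$ in an asymptotic sense: there exist quantities $\hat x_i(k)$, each computable from the information sequence $\mathcal I_{\mathcal A}(0:k)$, such that $\hat x_i(k)\to x_i(0)$ as $k\to\infty$ with probability one.
   Context: Digraph conventions: $\mathcal V=\{1,\dots,N\}$, no self-loops; $(j,i)\in\mathcal E$ means node $i$ can send messages to node $j$. $N_i^{in}=\{j:(i,j)\in\mathcal E\}$, $N_i^{out}=\{j:(j,i)\in\mathcal E\}$. Strongly connected: a directed path exists from any node to any other node. Privacy-Preserving Push-Sum Algorithm (each node $i$ has a private real initial state $x_i(0)$; $M>0$ is a fixed constant). Initialization: node $i$ draws $x^\alpha_{i,1}(0)\sim U(-M,M)$ and sets $x^\beta_{i,1}(0)=2x_i(0)-x^\alpha_{i,1}(0)$, $x^\alpha_{i,2}(0)=0$, $x^\beta_{i,2}(0)=2$. Weights: at $k=0$, node $i$ draws the numbers $\{p_{ji}(0):j\in N_i^{out}\cup\{i\}\}$ and $\alpha_i(0)$ independently from $\mathcal N(0,M)$ and normalizes them so that $\sum_{j=1}^N p_{ji}(0)+\alpha_i(0)=1$; at each $k\ge1$, node $i$ draws $\{p_{ji}(k):j\in N_i^{out}\cup\{i\}\}$ and $\alpha_i(k)$ independently from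 $U(0,1)$ and normalizes them so that $\sum_{j=1}^N p_{ji}(k)+\alpha_i(k)=1$; in all cases $p_{ji}(k)=0$ if $j\notin N_i^{out}\cup\{i\}$. State update, for $k\ge0$, $l=1,2$: node $i$ sends $p_{ji}(k)x^\alpha_{i,l}(k)$ to each $j\in N_i^{out}$ and updates $$x^\alpha_{i,l}(k+1)=\sum_{j\in N_i^{in}\cup\{i\}}p_{ij}(k)x^\alpha_{j,l}(k)+x^\beta_{i,l}(k),\qquad x^\beta_{i,l}(k+1)=\alpha_i(k)x^\alpha_{i,l}(k).$$ Node $i$'s estimated average is $\hat x^{ave}_i(k+1)=x^\alpha_{i,1}(k+1)/x^\alpha_{i,2}(k+1)$. The substate $x^\beta_{i,l}$ is never transmitted. Honest-but-curious nodes: nodes that follow the protocol (and know it), try to infer other nodes' private initial values from the data they receive, and may pool their data. For a set $\mathcal A$ of such nodes, the information available at time $k$ is $\mathcal I_{\mathcal A}(k)=\{\mathcal I_a(k):a\in\mathcal A\}$ with $$\mathcal I_a(k)=\{x^\alpha_{a,l}(k),x^\beta_{a,l}(k),p_{ja}(k),p_{ap}(k)x^\alpha_{p,l}(k): p\in N_a^{in},\ j\in\mathcal V,\ l=1,2\},$$ and $\mathcal I_{\mathcal A}(0:\kappa)=\bigcup_{0\le k\le\kappa}\mathcal I_{\mathcal A}(k)$. *)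

theory Defs
  imports "HOL-Probability.Probability"
begin

text \<open>Nodes are the naturals 1..N.  An edge (j,i) in E means node i can send to node j.\<close>

definition nodes :: "nat \<Rightarrow> nat set" where
  "nodes N = {1..N}"

definition Nin :: "(nat \<times> nat) set \<Rightarrow> nat \<Rightarrow> nat set" where
  "Nin E i = {j. (i, j) \<in> E}"

definition Nout :: "(nat \<times> nat) set \<Rightarrow> nat \<Rightarrow> nat set" where
  "Nout E i = {j. (j, i) \<in> E}"

definition digraph_on :: "nat \<Rightarrow> (nat \<times> nat) set \<Rightarrow> bool" where
  "digraph_on N E \<longleftrightarrow> E \<subseteq> nodes N \<times> nodes N \<and> (\<forall>v. (v, v) \<notin> E)"

definition strongly_connected :: "nat \<Rightarrow> (nat \<times> nat) set \<Rightarrow> bool" where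
  "strongly_connected N E \<longleftrightarrow> (\<forall>u\<in>nodes N. \<forall>v\<in>nodes N. (u, v) \<in> E\<^sup>*)"

text \<open>Elementary random draws of the protocol:
  XInit i        : the draw x^alpha_{i,1}(0) ~ U(-M,M);
  W k i (Some j) : raw (unnormalized) weight for p_{ji}(k);
  W k i None     : raw (unnormalized) weight for alpha_i(k).
  Raw weights are N(0,M) at k = 0 and U(0,1) at k >= 1.  All draws are independent.
  (Raw weights W k i (Some j) with j not an out-neighbour of i or i itself are drawn
  but never used.)\<close>

datatype draw = XInit nat | W nat nat "nat option"

definition draw_distr :: "real \<Rightarrow> draw \<Rightarrow> real measure" where
  "draw_distr M d = (case d of
      XInit _ \<Rightarrow> uniform_measure lborel {-M<..<M}
    | W k _ _ \<Rightarrow> (if k = 0 then density lborel (normal_density 0 (sqrt M))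
                 else uniform_measure lborel {0<..<1}))"

definition pp_space :: "real \<Rightarrow> (draw \<Rightarrow> real) measure" where
  "pp_space M = (\<Pi>\<^sub>M d\<in>UNIV. draw_distr M d)"

definition wnorm :: "(nat \<times> nat) set \<Rightarrow> (draw \<Rightarrow> real) \<Rightarrow> nat \<Rightarrow> nat \<Rightarrow> real" where
  "wnorm E \<omega> k i = (\<Sum>j\<in>Nout E i \<union> {i}. \<omega> (W k i (Some j))) + \<omega> (W k i None)"

definition pw :: "(nat \<times> nat) set \<Rightarrow> (draw \<Rightarrow> real) \<Rightarrow> nat \<Rightarrow> nat \<Rightarrow> nat \<Rightarrow> real" where
  "pw E \<omega> k j i = (if j \<in> Nout E i \<union> {i} then \<omega> (W k i (Some j)) / wnorm E \<omega> k i else 0)"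

definition alw :: "(nat \<times> nat) set \<Rightarrow> (draw \<Rightarrow> real) \<Rightarrow> nat \<Rightarrow> nat \<Rightarrow> real" where
  "alw E \<omega> k i = \<omega> (W k i None) / wnorm E \<omega> k i"

primrec st :: "(nat \<times> nat) set \<Rightarrow> (draw \<Rightarrow> real) \<Rightarrow> (nat \<Rightarrow> real) \<Rightarrow> (nat \<Rightarrow> real)
               \<Rightarrow> nat \<Rightarrow> (nat \<Rightarrow> real) \<times> (nat \<Rightarrow> real)" where
  "st E \<omega> a0 b0 0 = (a0, b0)"
| "st E \<omega> a0 b0 (Suc k) =
     (let a = fst (st E \<omega> a0 b0 k); b = snd (st E \<omega> a0 b0 k) in
       (\<lambda>i. (\<Sum>j\<in>Nin E i \<union> {i}. pw E \<omega> k i j * a j) + b i,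
        \<lambda>i. alw E \<omega> k i * a i))"

definition init_a :: "(nat \<Rightarrow> real) \<Rightarrow> (draw \<Rightarrow> real) \<Rightarrow> nat \<Rightarrow> nat \<Rightarrow> real" where
  "init_a x0 \<omega> l i = (if l = 1 then \<omega> (XInit i) else 0)"

definition init_b :: "(nat \<Rightarrow> real) \<Rightarrow> (draw \<Rightarrow> real) \<Rightarrow> nat \<Rightarrow> nat \<Rightarrow> real" where
  "init_b x0 \<omega> l i = (if l = 1 then 2 * x0 i - \<omega> (XInit i) else 2)"

definition xa :: "(nat \<times> nat) set \<Rightarrow> (nat \<Rightarrow> real) \<Rightarrow> (draw \<Rightarrow> real) \<Rightarrow> nat \<Rightarrow> nat \<Rightarrow> nat \<Rightarrow> real" where
  "xa E x0 \<omega> l k i = fst (st E \<omega> (init_a x0 \<omega> l) (init_b x0 \<omega> l) k) i"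

definition xb :: "(nat \<times> nat) set \<Rightarrow> (nat \<Rightarrow> real) \<Rightarrow> (draw \<Rightarrow> real) \<Rightarrow> nat \<Rightarrow> nat \<Rightarrow> nat \<Rightarrow> real" where
  "xb E x0 \<omega> l k i = snd (st E \<omega> (init_a x0 \<omega> l) (init_b x0 \<omega> l) k) i"

text \<open>Labels of the observable quantities:
  OXa k a l   : x^alpha_{a,l}(k);   OXb k a l : x^beta_{a,l}(k);
  OP k j a    : p_{ja}(k);          OM k a p l : p_{ap}(k) x^alpha_{p,l}(k).\<close>
datatype obs = OXa nat nat nat | OXb nat nat nat | OP nat nat nat | OM nat nat nat nat

text \<open>The information I_A(0:kappa), as a partial map from labels to values: a label is
  defined exactly when the corresponding quantity belongs to I_A(0:kappa).\<close>
definition info :: "nat \<Rightarrow> (nat \<times> nat) set \<Rightarrow> nat set \<Rightarrow> (nat \<Rightarrow> real) \<Rightarrow> (draw \<Rightarrow> real)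
                    \<Rightarrow> nat \<Rightarrow> obs \<Rightarrow> real option" where
  "info N E A x0 \<omega> \<kappa> ob = (case ob of
      OXa k a l \<Rightarrow> (if k \<le> \<kappa> \<and> a \<in> A \<and> l \<in> {1,2} then Some (xa E x0 \<omega> l k a) else None)
    | OXb k a l \<Rightarrow> (if k \<le> \<kappa> \<and> a \<in> A \<and> l \<in> {1,2} then Some (xb E x0 \<omega> l k a) else None)
    | OP k j a \<Rightarrow> (if k \<le> \<kappa> \<and> a \<in> A \<and> j \<in> nodes N then Some (pw E \<omega> k j a) else None)
    | OM k a p l \<Rightarrow> (if k \<le> \<kappa> \<and> a \<in> A \<and> p \<in> Nin E a \<and> l \<in> {1,2}
                     then Some (pw E \<omega> k a p * xa E x0 \<omega> l k p) else None))"

end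

theory Submission
  imports Defs
begin

text \<open>Stack the substates x^alpha and x^beta of all nodes into one vector. From step 1 on, the
  runs l = 1 and l = 2 evolve by the same column-stochastic matrices, so the ratio of the two runs
  at an alpha node is a weighted average of earlier ratios. With probability one, infinitely often
  all weights of a window are at least 1/2; since the graph of the augmented matrices is strongly
  connected with self loops, the matrix product over such a window is uniformly positive and the
  spread of the ratios contracts by a fixed factor. Hence consecutive ratios at node i become
  asymptotically equal.

  Node i's total mass x^alpha_{i,l} + x^beta_{i,l} equals its initial mass (2 x_i(0) for l = 1,
  2 for l = 2) plus the net inflow, which the neighbours of i observe. Since
  x^beta_{i,l}(k + 1) = alpha_i(k) x^alpha_{i,l}(k), both mass equations involve the current and
  the previous ratio at i; eliminating the unobserved quantities gives x_i(0) up to an error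
  proportional to the difference of these ratios times x^beta_{i,2}, which is bounded.\<close>

section \<open>Ratio consensus for time-varying column-stochastic matrices\<close>

primrec trans_prod :: "(nat \<Rightarrow> 'v \<Rightarrow> 'v \<Rightarrow> real) \<Rightarrow> 'v set \<Rightarrow> nat \<Rightarrow> nat \<Rightarrow> 'v \<Rightarrow> 'v \<Rightarrow> real"
where
  "trans_prod C V k 0 v u = (if v = u then 1 else 0)"
| "trans_prod C V k (Suc n) v u = (\<Sum>w\<in>V. C (k + n) v w * trans_prod C V k n w u)"

lemma linear_recurrence_trans_prod:
  assumes fin: "finite V"
    and rec: "\<And>t v. v \<in> V \<Longrightarrow> Y (Suc t) v = (\<Sum>u\<in>V. C t v u * Y t u)"
    and v: "v \<in> V"
  shows "Y (k + n) v = (\<Sum>u\<in>V. trans_prod C V k n v u * Y k u)"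
  using v
proof (induction n arbitrary: v)
  case 0
  have "(\<Sum>u\<in>V. trans_prod C V k 0 v u * Y k u) = (\<Sum>u\<in>V. if v = u then Y k u else 0)"
    by (rule sum.cong) auto
  then show ?case using fin 0 by simp
next
  case (Suc n)
  have "Y (k + Suc n) v = (\<Sum>w\<in>V. C (k + n) v w * (\<Sum>u\<in>V. trans_prod C V k n w u * Y k u))"
    using rec[OF Suc.prems, of "k + n"] Suc.IH by (simp cong: sum.cong)
  also have "\<dots> = (\<Sum>u\<in>V. \<Sum>w\<in>V. C (k + n) v w * (trans_prod C V k n w u * Y k u))"
    by (simp add: sum_distrib_left) (rule sum.swap)
  also have "\<dots> = (\<Sum>u\<in>V. trans_prod C V k (Suc n) v u * Y k u)"
    by (simp add: sum_distrib_right mult.assoc)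
  finally show ?case .
qed

lemma trans_prod_nonneg:
  assumes "\<And>t v u. k \<le> t \<Longrightarrow> 0 \<le> C t v u"
  shows "0 \<le> trans_prod C V k n v u"
  by (induction n arbitrary: v) (auto intro!: sum_nonneg mult_nonneg_nonneg assms)

lemma trans_prod_col_sum:
  assumes fin: "finite V"
    and col: "\<And>t u. k \<le> t \<Longrightarrow> u \<in> V \<Longrightarrow> (\<Sum>v\<in>V. C t v u) = 1"
    and u: "u \<in> V"
  shows "(\<Sum>v\<in>V. trans_prod C V k n v u) = 1"
proof (induction n)
  case 0
  then show ?case using fin u by (simp add: sum.delta')
next
  case (Suc n)
  have "(\<Sum>v\<in>V. trans_prod C V k (Suc n) v u)
      = (\<Sum>w\<in>V. trans_prod C V k n w u * (\<Sum>v\<in>V. C (k + n) v w))"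
    by (simp add: sum_distrib_left mult.commute) (rule sum.swap)
  also have "\<dots> = (\<Sum>w\<in>V. trans_prod C V k n w u)"
    using col by (intro sum.cong) auto
  finally show ?case using Suc by simp
qed

lemma trans_prod_le_1:
  assumes fin: "finite V"
    and nonneg: "\<And>t v u. k \<le> t \<Longrightarrow> 0 \<le> C t v u"
    and col: "\<And>t u. k \<le> t \<Longrightarrow> u \<in> V \<Longrightarrow> (\<Sum>v\<in>V. C t v u) = 1"
    and "u \<in> V" "v \<in> V"
  shows "trans_prod C V k n v u \<le> 1"
proof -
  have "trans_prod C V k n v u \<le> (\<Sum>v\<in>V. trans_prod C V k n v u)"
    using assms by (intro member_le_sum trans_prod_nonneg) auto
  then show ?thesis using trans_prod_col_sum[OF fin col \<open>u \<in> V\<close>] by simp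
qed

lemma trans_prod_ge_along_path:
  assumes nonneg: "\<And>t v u. k \<le> t \<Longrightarrow> 0 \<le> C t v u"
    and fin: "finite V" and R: "R \<subseteq> V \<times> V"
    and edge: "\<And>t u v. k \<le> t \<Longrightarrow> t < k + n \<Longrightarrow> (u, v) \<in> R \<Longrightarrow> \<delta> \<le> C t v u"
    and "0 \<le> \<delta>" and path: "(u, v) \<in> R ^^ n"
  shows "\<delta> ^ n \<le> trans_prod C V k n v u"
  using path edge
proof (induction n arbitrary: v)
  case 0
  then show ?case by simp
next
  case (Suc n)
  from Suc.prems(1) obtain w where uw: "(u, w) \<in> R ^^ n" and wv: "(w, v) \<in> R"
    by auto
  have "\<delta> \<le> C (k + n) v w" using Suc.prems(2)[of "k + n" w v] wv by simp
  then have "\<delta> ^ Suc n \<le> C (k + n) v w * trans_prod C V k n w u"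
    unfolding power_Suc using Suc.IH[OF uw] Suc.prems(2) \<open>0 \<le> \<delta>\<close>
    by (intro mult_mono) auto
  also have "\<dots> \<le> (\<Sum>x\<in>V. C (k + n) v x * trans_prod C V k n x u)"
    using fin wv R
    by (intro member_le_sum[where f = "\<lambda>x. C (k + n) v x * trans_prod C V k n x u"]
          mult_nonneg_nonneg nonneg trans_prod_nonneg) auto
  finally show ?case by simp
qed

lemma weighted_ratio_le:
  fixes p y z :: "'v \<Rightarrow> real"
  assumes fin: "finite V" and s: "s \<in> V"
    and p: "\<And>u. u \<in> V \<Longrightarrow> 0 \<le> p u" and z: "\<And>u. u \<in> V \<Longrightarrow> 0 < z u"
    and hi: "\<And>u. u \<in> V \<Longrightarrow> y u / z u \<le> hi"
    and pos: "0 < (\<Sum>u\<in>V. p u * z u)"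
    and share: "c * (\<Sum>u\<in>V. p u * z u) \<le> p s * z s" and "0 \<le> c"
  shows "(\<Sum>u\<in>V. p u * y u) / (\<Sum>u\<in>V. p u * z u) \<le> hi - c * (hi - y s / z s)"
proof -
  define Z where "Z = (\<Sum>u\<in>V. p u * z u)"
  have "(\<Sum>u\<in>V - {s}. p u * y u) \<le> (\<Sum>u\<in>V - {s}. hi * (p u * z u))"
  proof (rule sum_mono)
    fix u assume u: "u \<in> V - {s}"
    have "p u * y u = p u * z u * (y u / z u)" using z[of u] u by simp
    also have "\<dots> \<le> p u * z u * hi"
      using u hi[of u] p[of u] z[of u] by (intro mult_left_mono) auto
    finally show "p u * y u \<le> hi * (p u * z u)" by (simp add: ac_simps)
  qed
  also have "\<dots> = hi * (Z - p s * z s)"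
    unfolding Z_def using fin s by (simp add: sum.remove sum_distrib_left)
  finally have "(\<Sum>u\<in>V. p u * y u) \<le> hi * Z - p s * z s * (hi - y s / z s)"
    using fin s z[OF s] by (simp add: sum.remove algebra_simps)
  also have "\<dots> \<le> hi * Z - c * Z * (hi - y s / z s)"
    using share hi[OF s] unfolding Z_def by (intro diff_left_mono mult_right_mono) auto
  finally have "(\<Sum>u\<in>V. p u * y u) \<le> Z * (hi - c * (hi - y s / z s))"
    by (simp add: algebra_simps)
  then show ?thesis using pos unfolding Z_def by (simp add: pos_divide_le_eq mult.commute)
qed

lemma weighted_ratio_ge:
  fixes p y z :: "'v \<Rightarrow> real"
  assumes fin: "finite V" and s: "s \<in> V"
    and p: "\<And>u. u \<in> V \<Longrightarrow> 0 \<le> p u" and z: "\<And>u. u \<in> V \<Longrightarrow> 0 < z u"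
    and lo: "\<And>u. u \<in> V \<Longrightarrow> lo \<le> y u / z u"
    and pos: "0 < (\<Sum>u\<in>V. p u * z u)"
    and share: "c * (\<Sum>u\<in>V. p u * z u) \<le> p s * z s" and "0 \<le> c"
  shows "lo + c * (y s / z s - lo) \<le> (\<Sum>u\<in>V. p u * y u) / (\<Sum>u\<in>V. p u * z u)"
proof -
  have "(\<Sum>u\<in>V. p u * - y u) / (\<Sum>u\<in>V. p u * z u) \<le> - lo - c * (- lo - - y s / z s)"
    using lo by (intro weighted_ratio_le[OF fin s p z _ pos share \<open>0 \<le> c\<close>]) (auto simp: neg_le_iff_le)
  then show ?thesis by (simp add: sum_negf algebra_simps)
qed

lemma dominant_share_ge:
  fixes p z :: "'v \<Rightarrow> real"
  assumes fin: "finite V" and s: "s \<in> V"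
    and p: "\<And>u. u \<in> V \<Longrightarrow> 0 \<le> p u \<and> p u \<le> 1"
    and z: "\<And>u. u \<in> V \<Longrightarrow> 0 < z u \<and> z u \<le> z s"
    and "\<delta> \<le> p s" "0 \<le> \<delta>"
  shows "\<delta> / card V * (\<Sum>u\<in>V. p u * z u) \<le> p s * z s"
proof -
  have card: "0 < card V" using fin s card_gt_0_iff by blast
  have "(\<Sum>u\<in>V. p u * z u) \<le> (\<Sum>u\<in>V. z s)"
    using p z by (intro sum_mono) (meson dual_order.trans less_imp_le mult_left_le_one_le)
  then have "\<delta> / card V * (\<Sum>u\<in>V. p u * z u) \<le> \<delta> / card V * (card V * z s)"
    using \<open>0 \<le> \<delta>\<close> by (intro mult_left_mono) auto
  also have "\<dots> \<le> p s * z s"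
    using card \<open>\<delta> \<le> p s\<close> z[OF s] by (simp add: mult_right_mono)
  finally show ?thesis .
qed

locale ratio_consensus =
  fixes V :: "'v set" and C :: "nat \<Rightarrow> 'v \<Rightarrow> 'v \<Rightarrow> real"
    and y z :: "nat \<Rightarrow> 'v \<Rightarrow> real" and k0 :: nat
  assumes finite_V: "finite V" and V_nonempty: "V \<noteq> {}"
    and y_rec: "\<And>t v. v \<in> V \<Longrightarrow> y (Suc t) v = (\<Sum>u\<in>V. C t v u * y t u)"
    and z_rec: "\<And>t v. v \<in> V \<Longrightarrow> z (Suc t) v = (\<Sum>u\<in>V. C t v u * z t u)"
    and C_nonneg: "\<And>t v u. k0 \<le> t \<Longrightarrow> 0 \<le> C t v u"
    and C_col_sum: "\<And>t u. k0 \<le> t \<Longrightarrow> u \<in> V \<Longrightarrow> (\<Sum>v\<in>V. C t v u) = 1"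
    and z_pos: "\<And>t v. k0 \<le> t \<Longrightarrow> v \<in> V \<Longrightarrow> 0 < z t v"
begin

definition ratio :: "nat \<Rightarrow> 'v \<Rightarrow> real" where
  "ratio t v = y t v / z t v"

definition ratio_max :: "nat \<Rightarrow> real" where
  "ratio_max t = Max (ratio t ` V)"

definition ratio_min :: "nat \<Rightarrow> real" where
  "ratio_min t = Min (ratio t ` V)"

definition spread :: "nat \<Rightarrow> real" where
  "spread t = ratio_max t - ratio_min t"

lemma ratio_le_max: "v \<in> V \<Longrightarrow> ratio t v \<le> ratio_max t"
  unfolding ratio_max_def using finite_V by simp

lemma min_le_ratio: "v \<in> V \<Longrightarrow> ratio_min t \<le> ratio t v"
  unfolding ratio_min_def using finite_V by simp

lemma spread_nonneg: "0 \<le> spread t"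
proof -
  obtain v where "v \<in> V" using V_nonempty by auto
  then show ?thesis using ratio_le_max[of v t] min_le_ratio[of v t] by (simp add: spread_def)
qed

lemma trans_prod_nonneg': "k0 \<le> t \<Longrightarrow> 0 \<le> trans_prod C V t n v u"
  by (rule trans_prod_nonneg) (auto intro: C_nonneg)

lemma trans_prod_le_1':
  "k0 \<le> t \<Longrightarrow> u \<in> V \<Longrightarrow> v \<in> V \<Longrightarrow> trans_prod C V t n v u \<le> 1"
  by (rule trans_prod_le_1[OF finite_V]) (auto intro: C_nonneg C_col_sum)

lemma ratio_shift:
  assumes "v \<in> V"
  shows "ratio (t + n) v = (\<Sum>u\<in>V. trans_prod C V t n v u * y t u) / (\<Sum>u\<in>V. trans_prod C V t n v u * z t u)"
  unfolding ratio_def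
  using linear_recurrence_trans_prod[where Y = y, OF finite_V y_rec assms]
    linear_recurrence_trans_prod[where Y = z, OF finite_V z_rec assms] by simp

lemma weighted_z_pos:
  assumes t: "k0 \<le> t" and v: "v \<in> V"
  shows "0 < (\<Sum>u\<in>V. trans_prod C V t n v u * z t u)"
  using linear_recurrence_trans_prod[where Y = z, OF finite_V z_rec v, of t n] z_pos[of "t + n" v] t v by simp

lemma ratio_bounds_shifted:
  assumes t: "k0 \<le> t" and v: "v \<in> V" and s: "s \<in> V"
    and share: "c * (\<Sum>u\<in>V. trans_prod C V t n v u * z t u) \<le> trans_prod C V t n v s * z t s"
    and "0 \<le> c"
  shows "ratio_min t + c * (ratio t s - ratio_min t) \<le> ratio (t + n) v"
    and "ratio (t + n) v \<le> ratio_max t - c * (ratio_max t - ratio t s)"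
  unfolding ratio_shift[OF v]
  using weighted_ratio_ge[OF finite_V s _ _ _ weighted_z_pos[OF t v] share \<open>0 \<le> c\<close>]
    weighted_ratio_le[OF finite_V s _ _ _ weighted_z_pos[OF t v] share \<open>0 \<le> c\<close>]
    trans_prod_nonneg'[OF t] z_pos[OF t] min_le_ratio ratio_le_max
  by (auto simp: ratio_def)

lemma ratio_in_earlier_range:
  assumes "k0 \<le> t" and "v \<in> V"
  shows "ratio_min t \<le> ratio (t + n) v \<and> ratio (t + n) v \<le> ratio_max t"
proof -
  obtain s where s: "s \<in> V" using V_nonempty by auto
  have "0 \<le> trans_prod C V t n v s * z t s"
    using trans_prod_nonneg'[OF assms(1)] z_pos[OF assms(1) s] by simp
  then show ?thesis using ratio_bounds_shifted[OF assms s, of 0] by simp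
qed

lemma spread_antimono:
  assumes "k0 \<le> t"
  shows "spread (t + n) \<le> spread t"
proof -
  have "ratio_max (t + n) \<le> ratio_max t" "ratio_min t \<le> ratio_min (t + n)"
    unfolding ratio_max_def[of "t + n"] ratio_min_def[of "t + n"]
    using finite_V V_nonempty ratio_in_earlier_range[OF assms] by auto
  then show ?thesis by (simp add: spread_def)
qed

text \<open>If the product over the window [t, t + n) is uniformly positive, the node s carrying the
  largest z-mass contributes a fixed share of every new weighted average, which pulls every
  new ratio a fixed fraction of the way towards ratio t s.\<close>

lemma spread_contracts:
  assumes t: "k0 \<le> t" and \<gamma>: "0 \<le> \<gamma>"
    and pos: "\<And>v u. v \<in> V \<Longrightarrow> u \<in> V \<Longrightarrow> \<gamma> \<le> trans_prod C V t n v u"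
  shows "spread (t + n) \<le> (1 - \<gamma> / card V) * spread t"
proof -
  obtain s where s: "s \<in> V" and s_max: "z t s = Max (z t ` V)"
    using finite_V V_nonempty by (metis Max_in finite_imageI image_iff image_is_empty)
  have bounds: "ratio_min t + \<gamma> / card V * (ratio t s - ratio_min t) \<le> ratio (t + n) v \<and>
      ratio (t + n) v \<le> ratio_max t - \<gamma> / card V * (ratio_max t - ratio t s)" if v: "v \<in> V" for v
  proof -
    have "\<gamma> / card V * (\<Sum>u\<in>V. trans_prod C V t n v u * z t u) \<le> trans_prod C V t n v s * z t s"
      using finite_V s_max z_pos[OF t] pos[OF v s] \<gamma> s v
        trans_prod_nonneg'[OF t] trans_prod_le_1'[OF t _ v]
      by (intro dominant_share_ge[OF finite_V s]) auto
    then show ?thesis using ratio_bounds_shifted[OF t v s, of "\<gamma> / card V"] \<gamma> by simp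
  qed
  have "ratio_max (t + n) \<le> ratio_max t - \<gamma> / card V * (ratio_max t - ratio t s)"
    "ratio_min t + \<gamma> / card V * (ratio t s - ratio_min t) \<le> ratio_min (t + n)"
    unfolding ratio_max_def[of "t + n"] ratio_min_def[of "t + n"]
    using finite_V V_nonempty bounds by auto
  then show ?thesis by (simp add: spread_def algebra_simps)
qed

context
  fixes \<gamma> :: real and n :: nat
  assumes \<gamma>_pos: "0 < \<gamma>"
    and often: "infinite {t. k0 \<le> t \<and> (\<forall>v\<in>V. \<forall>u\<in>V. \<gamma> \<le> trans_prod C V t n v u)}"
begin

lemma contraction_factor_bounds: "0 < \<gamma> / card V" "\<gamma> / card V \<le> 1"
proof -
  obtain t where t: "k0 \<le> t" "\<forall>v\<in>V. \<forall>u\<in>V. \<gamma> \<le> trans_prod C V t n v u"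
    using often by (auto simp: infinite_nat_iff_unbounded_le)
  obtain v where v: "v \<in> V" using V_nonempty by auto
  have "\<gamma> \<le> 1"
    using t v trans_prod_le_1'[OF t(1) v v, of n] by force
  moreover have "1 \<le> card V" using finite_V V_nonempty by (simp add: Suc_leI card_gt_0_iff)
  ultimately show "0 < \<gamma> / card V" "\<gamma> / card V \<le> 1" using \<gamma>_pos by (auto simp: divide_le_eq_1)
qed

lemma spread_geometric_decay: "\<exists>K\<ge>k0. spread K \<le> (1 - \<gamma> / card V) ^ m * spread k0"
proof (induction m)
  case 0
  then show ?case by auto
next
  case (Suc m)
  let ?c = "\<gamma> / card V"
  from Suc obtain K where K: "k0 \<le> K" "spread K \<le> (1 - ?c) ^ m * spread k0" by auto
  obtain t where t: "K \<le> t" "\<forall>v\<in>V. \<forall>u\<in>V. \<gamma> \<le> trans_prod C V t n v u"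
    using often unfolding infinite_nat_iff_unbounded_le by blast
  have "spread (t + n) \<le> (1 - ?c) * spread t"
    using t K \<gamma>_pos by (intro spread_contracts) auto
  also have "\<dots> \<le> (1 - ?c) * spread K"
    using spread_antimono[OF K(1), of "t - K"] t contraction_factor_bounds
    by (intro mult_left_mono) auto
  also have "\<dots> \<le> (1 - ?c) ^ Suc m * spread k0"
    using contraction_factor_bounds mult_left_mono[OF K(2), of "1 - ?c"] by (simp add: mult.assoc)
  finally show ?case using t K by (intro exI[of _ "t + n"]) auto
qed

lemma spread_tendsto_0: "spread \<longlonglongrightarrow> 0"
proof (rule LIMSEQ_I)
  fix r :: real assume "0 < r"
  have "(\<lambda>m. (1 - \<gamma> / card V) ^ m * spread k0) \<longlonglongrightarrow> 0"
    using contraction_factor_bounds by (intro tendsto_mult_left_zero LIMSEQ_power_zero) auto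
  then obtain m where "norm ((1 - \<gamma> / card V) ^ m * spread k0 - 0) < r"
    using LIMSEQ_D \<open>0 < r\<close> by blast
  moreover obtain K where "k0 \<le> K" "spread K \<le> (1 - \<gamma> / card V) ^ m * spread k0"
    using spread_geometric_decay by blast
  ultimately have "spread t < r" if "K \<le> t" for t
    using spread_antimono[of K "t - K"] that by (fastforce simp: abs_less_iff)
  then show "\<exists>no. \<forall>t\<ge>no. norm (spread t - 0) < r" using spread_nonneg by auto
qed

lemma ratio_increment_tendsto_0:
  assumes w: "w \<in> V"
  shows "(\<lambda>t. ratio (Suc t) w - ratio t w) \<longlonglongrightarrow> 0"
proof (rule Lim_null_comparison[OF _ spread_tendsto_0])
  show "\<forall>\<^sub>F t in sequentially. norm (ratio (Suc t) w - ratio t w) \<le> spread t"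
    using eventually_ge_at_top[of k0]
  proof eventually_elim
    case (elim t)
    then show ?case
      using ratio_in_earlier_range[OF elim w, of 1] ratio_le_max[OF w, of t] min_le_ratio[OF w, of t]
      by (auto simp: spread_def abs_if)
  qed
qed

end

end

section \<open>The protocol as a linear system\<close>

lemma finite_nodes [simp]: "finite (nodes N)"
  by (simp add: nodes_def)

lemma Nin_subset_nodes: "digraph_on N E \<Longrightarrow> j \<in> nodes N \<Longrightarrow> Nin E j \<union> {j} \<subseteq> nodes N"
  by (auto simp: digraph_on_def Nin_def)

lemma Nout_subset_nodes: "digraph_on N E \<Longrightarrow> j \<in> nodes N \<Longrightarrow> Nout E j \<union> {j} \<subseteq> nodes N"
  by (auto simp: digraph_on_def Nout_def)

lemma finite_Nin: "digraph_on N E \<Longrightarrow> j \<in> nodes N \<Longrightarrow> finite (Nin E j)"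
  using Nin_subset_nodes by (meson finite_nodes finite_subset le_sup_iff)

lemma finite_Nout: "digraph_on N E \<Longrightarrow> j \<in> nodes N \<Longrightarrow> finite (Nout E j)"
  using Nout_subset_nodes by (meson finite_nodes finite_subset le_sup_iff)

lemma not_in_Nin_self: "digraph_on N E \<Longrightarrow> j \<notin> Nin E j"
  by (auto simp: digraph_on_def Nin_def)

lemma not_in_Nout_self: "digraph_on N E \<Longrightarrow> j \<notin> Nout E j"
  by (auto simp: digraph_on_def Nout_def)

lemma xa_0: "xa E x0 \<omega> l 0 j = init_a x0 \<omega> l j"
  by (simp add: xa_def)

lemma xb_0: "xb E x0 \<omega> l 0 j = init_b x0 \<omega> l j"
  by (simp add: xb_def)

lemma xa_Suc:
  "xa E x0 \<omega> l (Suc t) j = (\<Sum>m\<in>Nin E j \<union> {j}. pw E \<omega> t j m * xa E x0 \<omega> l t m) + xb E x0 \<omega> l t j"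
  by (simp add: xa_def xb_def Let_def)

lemma xb_Suc: "xb E x0 \<omega> l (Suc t) j = alw E \<omega> t j * xa E x0 \<omega> l t j"
  by (simp add: xa_def xb_def Let_def)

lemma pw_col_sum:
  assumes "wnorm E \<omega> t m \<noteq> 0"
  shows "(\<Sum>j\<in>Nout E m \<union> {m}. pw E \<omega> t j m) + alw E \<omega> t m = 1"
  using assms
  by (simp add: pw_def alw_def wnorm_def sum_divide_distrib[symmetric] add_divide_distrib[symmetric])

lemma sum_pw_Nout:
  assumes "digraph_on N E" "m \<in> nodes N"
  shows "(\<Sum>j\<in>nodes N. pw E \<omega> t j m * f j) = (\<Sum>j\<in>Nout E m \<union> {m}. pw E \<omega> t j m * f j)"
  using Nout_subset_nodes[OF assms] by (intro sum.mono_neutral_right) (auto simp: pw_def)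

lemma sum_pw_Nin:
  assumes "digraph_on N E" "j \<in> nodes N"
  shows "(\<Sum>m\<in>nodes N. pw E \<omega> t j m * f m) = (\<Sum>m\<in>Nin E j \<union> {j}. pw E \<omega> t j m * f m)"
  using Nin_subset_nodes[OF assms]
  by (intro sum.mono_neutral_right) (auto simp: pw_def Nin_def Nout_def)

definition draws_in_unit_interval :: "(draw \<Rightarrow> real) \<Rightarrow> bool" where
  "draws_in_unit_interval \<omega> \<longleftrightarrow> (\<forall>t\<ge>1. \<forall>j q. 0 < \<omega> (W t j q) \<and> \<omega> (W t j q) < 1)"

context
  fixes \<omega> :: "draw \<Rightarrow> real" and t :: nat
  assumes unit: "draws_in_unit_interval \<omega>" and t: "1 \<le> t"
begin

lemma wnorm_pos: "0 < wnorm E \<omega> t j"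
  using unit t unfolding wnorm_def draws_in_unit_interval_def
  by (intro add_nonneg_pos sum_nonneg) (auto intro: less_imp_le)

lemma pw_nonneg: "0 \<le> pw E \<omega> t j m"
  using wnorm_pos[of E m] unit t unfolding pw_def draws_in_unit_interval_def
  by (auto intro!: divide_nonneg_pos less_imp_le)

lemma pw_self_pos: "0 < pw E \<omega> t j j"
  using wnorm_pos[of E j] unit t unfolding pw_def draws_in_unit_interval_def by auto

lemma pw_out_pos: "j \<in> Nout E m \<Longrightarrow> 0 < pw E \<omega> t j m"
  using wnorm_pos[of E m] unit t unfolding pw_def draws_in_unit_interval_def by auto

lemma alw_pos: "0 < alw E \<omega> t j"
  using wnorm_pos[of E j] unit t unfolding alw_def draws_in_unit_interval_def by auto

end

text \<open>The augmented node (j, True) carries x^alpha_j and (j, False) carries x^beta_j.\<close>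

definition aug_nodes :: "nat \<Rightarrow> (nat \<times> bool) set" where
  "aug_nodes N = nodes N \<times> UNIV"

fun aug_weight :: "(nat \<times> nat) set \<Rightarrow> (draw \<Rightarrow> real) \<Rightarrow> nat \<Rightarrow> nat \<times> bool \<Rightarrow> nat \<times> bool \<Rightarrow> real"
where
  "aug_weight E \<omega> t (j, a) (m, b) =
    (if a \<and> b then pw E \<omega> t j m
     else if a then (if m = j then 1 else 0)
     else if b then (if m = j then alw E \<omega> t j else 0)
     else 0)"

definition aug_state :: "(nat \<times> nat) set \<Rightarrow> (nat \<Rightarrow> real) \<Rightarrow> (draw \<Rightarrow> real) \<Rightarrow> nat \<Rightarrow> nat \<Rightarrow> nat \<times> bool \<Rightarrow> real"
where
  "aug_state E x0 \<omega> l k v = (if snd v then xa E x0 \<omega> l k (fst v) else xb E x0 \<omega> l k (fst v))"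

lemma finite_aug_nodes [simp]: "finite (aug_nodes N)"
  by (simp add: aug_nodes_def)

lemma sum_aug_nodes: "(\<Sum>v\<in>aug_nodes N. f v) = (\<Sum>m\<in>nodes N. f (m, True) + f (m, False))"
proof -
  have "(\<Sum>v\<in>aug_nodes N. f v) = (\<Sum>m\<in>nodes N. \<Sum>b\<in>UNIV. f (m, b))"
    unfolding aug_nodes_def by (simp add: sum.cartesian_product)
  then show ?thesis by (simp add: UNIV_bool add.commute)
qed

lemma aug_state_Suc:
  assumes g: "digraph_on N E" and v: "v \<in> aug_nodes N"
  shows "aug_state E x0 \<omega> l (Suc t) v = (\<Sum>u\<in>aug_nodes N. aug_weight E \<omega> t v u * aug_state E x0 \<omega> l t u)"
proof -
  obtain j b where v: "v = (j, b)" and j: "j \<in> nodes N" using v by (auto simp: aug_nodes_def)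
  show ?thesis
  proof (cases b)
    case True
    have "(\<Sum>u\<in>aug_nodes N. aug_weight E \<omega> t v u * aug_state E x0 \<omega> l t u)
        = (\<Sum>m\<in>nodes N. pw E \<omega> t j m * xa E x0 \<omega> l t m) + xb E x0 \<omega> l t j"
      unfolding sum_aug_nodes sum.distrib using j v True
      by (simp add: aug_state_def sum.distrib if_distrib[of "\<lambda>c. c * _"] cong: if_cong)
    then show ?thesis using v True by (simp add: aug_state_def xa_Suc sum_pw_Nin[OF g j])
  next
    case False
    have "(\<Sum>u\<in>aug_nodes N. aug_weight E \<omega> t v u * aug_state E x0 \<omega> l t u)
        = alw E \<omega> t j * xa E x0 \<omega> l t j"
      unfolding sum_aug_nodes using j v False
      by (simp add: aug_state_def sum.distrib if_distrib[of "\<lambda>c. c * _"] cong: if_cong)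
    then show ?thesis using v False by (simp add: aug_state_def xb_Suc)
  qed
qed

context
  fixes \<omega> :: "draw \<Rightarrow> real"
  assumes unit: "draws_in_unit_interval \<omega>"
begin

lemma aug_weight_nonneg: "1 \<le> t \<Longrightarrow> 0 \<le> aug_weight E \<omega> t v u"
  using pw_nonneg[OF unit] alw_pos[OF unit] by (cases v; cases u) (auto simp: less_imp_le)

lemma aug_weight_col_sum:
  assumes g: "digraph_on N E" and t: "1 \<le> t" and u: "u \<in> aug_nodes N"
  shows "(\<Sum>v\<in>aug_nodes N. aug_weight E \<omega> t v u) = 1"
proof -
  obtain m b where u: "u = (m, b)" and m: "m \<in> nodes N" using u by (auto simp: aug_nodes_def)
  show ?thesis
  proof (cases b)
    case True
    have "(\<Sum>v\<in>aug_nodes N. aug_weight E \<omega> t v u) = (\<Sum>j\<in>nodes N. pw E \<omega> t j m) + alw E \<omega> t m"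
      unfolding sum_aug_nodes using m u True by (simp add: sum.distrib)
    also have "\<dots> = 1"
      using sum_pw_Nout[OF g m, of \<omega> t "\<lambda>_. 1"] pw_col_sum[of E \<omega> t m] wnorm_pos[OF unit t, of E m]
      by simp
    finally show ?thesis .
  next
    case False
    then show ?thesis unfolding sum_aug_nodes using m u by simp
  qed
qed

lemma xa2_pos_xb2_nonneg:
  assumes g: "digraph_on N E" and t: "1 \<le> t"
  shows "\<forall>j\<in>nodes N. 0 < xa E x0 \<omega> 2 t j \<and> 0 \<le> xb E x0 \<omega> 2 t j"
  using t
proof (induction t rule: dec_induct)
  case base
  show ?case by (simp add: xa_Suc xb_Suc xa_0 xb_0 init_a_def init_b_def)
next
  case (step t)
  show ?case
  proof
    fix j assume j: "j \<in> nodes N"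
    have "pw E \<omega> t j j * xa E x0 \<omega> 2 t j \<le> (\<Sum>m\<in>Nin E j \<union> {j}. pw E \<omega> t j m * xa E x0 \<omega> 2 t m)"
      using step.IH Nin_subset_nodes[OF g j] finite_Nin[OF g j] pw_nonneg[OF unit step.hyps(1)]
      by (intro member_le_sum[where f = "\<lambda>m. pw E \<omega> t j m * xa E x0 \<omega> 2 t m"]) fastforce+
    moreover have "0 < pw E \<omega> t j j * xa E x0 \<omega> 2 t j"
      using pw_self_pos[OF unit step.hyps(1)] step.IH j by simp
    ultimately show "0 < xa E x0 \<omega> 2 (Suc t) j \<and> 0 \<le> xb E x0 \<omega> 2 (Suc t) j"
      using step.IH j alw_pos[OF unit step.hyps(1), of E j]
      by (simp add: xa_Suc xb_Suc add_pos_nonneg less_imp_le)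
  qed
qed

lemma aug_state2_pos:
  assumes "digraph_on N E" and "2 \<le> t" and "v \<in> aug_nodes N"
  shows "0 < aug_state E x0 \<omega> 2 t v"
proof -
  obtain s where t: "t = Suc s" "1 \<le> s" using \<open>2 \<le> t\<close> by (cases t) auto
  then show ?thesis
    using xa2_pos_xb2_nonneg[OF assms(1), of t] xa2_pos_xb2_nonneg[OF assms(1) t(2)] alw_pos[OF unit t(2)]
      assms(3)
    by (auto simp: aug_state_def aug_nodes_def xb_Suc)
qed

lemma aug_state_sum_const:
  assumes g: "digraph_on N E" and t: "1 \<le> t"
  shows "(\<Sum>v\<in>aug_nodes N. aug_state E x0 \<omega> l t v) = (\<Sum>v\<in>aug_nodes N. aug_state E x0 \<omega> l 1 v)"
  using t
proof (induction t rule: dec_induct)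
  case (step t)
  have "(\<Sum>v\<in>aug_nodes N. aug_state E x0 \<omega> l (Suc t) v)
      = (\<Sum>u\<in>aug_nodes N. aug_state E x0 \<omega> l t u * (\<Sum>v\<in>aug_nodes N. aug_weight E \<omega> t v u))"
    by (simp add: aug_state_Suc[OF g] sum_distrib_left mult.commute cong: sum.cong) (rule sum.swap)
  also have "\<dots> = (\<Sum>u\<in>aug_nodes N. aug_state E x0 \<omega> l t u)"
    using aug_weight_col_sum[OF g step.hyps(1)] by simp
  finally show ?case using step.IH by simp
qed simp

lemma xb2_le_total_mass:
  assumes g: "digraph_on N E" and t: "1 \<le> t" and i: "i \<in> nodes N"
  shows "xb E x0 \<omega> 2 t i \<le> (\<Sum>v\<in>aug_nodes N. aug_state E x0 \<omega> 2 1 v)"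
proof -
  have "xb E x0 \<omega> 2 t i = aug_state E x0 \<omega> 2 t (i, False)"
    by (simp add: aug_state_def)
  also have "\<dots> \<le> (\<Sum>v\<in>aug_nodes N. aug_state E x0 \<omega> 2 t v)"
    using xa2_pos_xb2_nonneg[OF g t] i
    by (intro member_le_sum) (auto simp: aug_nodes_def aug_state_def less_imp_le)
  also have "\<dots> = (\<Sum>v\<in>aug_nodes N. aug_state E x0 \<omega> 2 1 v)"
    by (rule aug_state_sum_const[OF g t])
  finally show ?thesis .
qed

end

section \<open>Connectivity and heavy windows\<close>

lemma relpow_uniform_length:
  assumes fin: "finite V" and refl: "\<And>v. v \<in> V \<Longrightarrow> (v, v) \<in> S"
    and conn: "\<And>u v. u \<in> V \<Longrightarrow> v \<in> V \<Longrightarrow> (u, v) \<in> S\<^sup>*"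
  shows "\<exists>L. \<forall>u\<in>V. \<forall>v\<in>V. (u, v) \<in> S ^^ L"
proof -
  have "\<forall>p\<in>V \<times> V. \<exists>n. p \<in> S ^^ n"
    using conn by (auto simp: rtrancl_power)
  then obtain f where f: "\<And>p. p \<in> V \<times> V \<Longrightarrow> p \<in> S ^^ f p" by metis
  define L where "L = Max (f ` (V \<times> V))"
  have loop: "(v, v) \<in> S ^^ k" if "v \<in> V" for v k
    by (induction k) (auto intro: relpow_Suc_I refl[OF that])
  have "(u, v) \<in> S ^^ L" if "u \<in> V" "v \<in> V" for u v
  proof -
    have "(u, v) \<in> S ^^ (f (u, v) + (L - f (u, v)))"
      using relpow_trans[OF f loop] that by auto
    moreover have "f (u, v) \<le> L" unfolding L_def using fin that by simp
    ultimately show ?thesis by simp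
  qed
  then show ?thesis by blast
qed

definition alpha_edges :: "nat \<Rightarrow> (nat \<times> nat) set \<Rightarrow> ((nat \<times> bool) \<times> (nat \<times> bool)) set" where
  "alpha_edges N E = {((m, True), (j, True)) | m j. m \<in> nodes N \<and> j \<in> nodes N \<and> ((j, m) \<in> E \<or> j = m)}"

definition aug_edges :: "nat \<Rightarrow> (nat \<times> nat) set \<Rightarrow> ((nat \<times> bool) \<times> (nat \<times> bool)) set" where
  "aug_edges N E = alpha_edges N E
     \<union> {((j, True), (j, False)) | j. j \<in> nodes N} \<union> {((j, False), (j, True)) | j. j \<in> nodes N}"

lemma aug_edges_subset: "aug_edges N E \<subseteq> aug_nodes N \<times> aug_nodes N"
  by (auto simp: aug_edges_def alpha_edges_def aug_nodes_def)

lemma alpha_edges_rtrancl: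
  assumes g: "digraph_on N E" and "(a, b) \<in> E\<^sup>*" and "a \<in> nodes N"
  shows "((b, True), (a, True)) \<in> (alpha_edges N E)\<^sup>*"
  using assms(2)
proof (induction rule: rtrancl_induct)
  case (step b c)
  then have "((c, True), (b, True)) \<in> alpha_edges N E"
    using g by (auto simp: alpha_edges_def digraph_on_def)
  then show ?case using step.IH by (rule converse_rtrancl_into_rtrancl)
qed simp

lemma aug_edges_uniform_paths:
  assumes g: "digraph_on N E" and sc: "strongly_connected N E"
  shows "\<exists>L. \<forall>u\<in>aug_nodes N. \<forall>v\<in>aug_nodes N. (u, v) \<in> aug_edges N E ^^ L"
proof -
  obtain L where L: "\<forall>u\<in>nodes N \<times> {True}. \<forall>v\<in>nodes N \<times> {True}. (u, v) \<in> alpha_edges N E ^^ L"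
    using relpow_uniform_length[of "nodes N \<times> {True}" "alpha_edges N E"]
      alpha_edges_rtrancl[OF g] sc
    by (fastforce simp: alpha_edges_def strongly_connected_def)
  have "(u, v) \<in> aug_edges N E ^^ Suc (Suc L)" if u: "u \<in> aug_nodes N" and v: "v \<in> aug_nodes N" for u v
  proof -
    obtain a b c d where u: "u = (a, b)" "a \<in> nodes N" and v: "v = (c, d)" "c \<in> nodes N"
      using u v by (cases u; cases v) (auto simp: aug_nodes_def)
    have "(u, (a, True)) \<in> aug_edges N E" "((c, True), v) \<in> aug_edges N E"
      using u v by (cases b; cases d; auto simp: aug_edges_def alpha_edges_def)+
    moreover have "((a, True), (c, True)) \<in> aug_edges N E ^^ L"
      using L u v relpowp_mono[to_set, of "alpha_edges N E" "aug_edges N E"]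
      by (auto simp: aug_edges_def)
    ultimately show ?thesis by (meson relpow_Suc_I relpow_Suc_I2)
  qed
  then show ?thesis by blast
qed

definition heavy_window :: "nat \<Rightarrow> (draw \<Rightarrow> real) \<Rightarrow> nat \<Rightarrow> nat \<Rightarrow> bool" where
  "heavy_window N \<omega> t L \<longleftrightarrow>
    (\<forall>s<L. \<forall>j\<in>nodes N. \<forall>q\<in>insert None (Some ` nodes N). 1/2 \<le> \<omega> (W (t + s) j q))"

lemma wnorm_le:
  assumes g: "digraph_on N E" and unit: "draws_in_unit_interval \<omega>" and t: "1 \<le> t"
    and m: "m \<in> nodes N"
  shows "wnorm E \<omega> t m \<le> N + 1"
proof -
  have "(\<Sum>j\<in>Nout E m \<union> {m}. \<omega> (W t m (Some j))) \<le> real (card (Nout E m \<union> {m})) * 1"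
    using unit t by (intro sum_bounded_above) (auto simp: draws_in_unit_interval_def less_imp_le)
  also have "card (Nout E m \<union> {m}) \<le> N"
    using card_mono[OF finite_nodes Nout_subset_nodes[OF g m]] by (simp add: nodes_def)
  finally have "(\<Sum>j\<in>Nout E m \<union> {m}. \<omega> (W t m (Some j))) \<le> N" by simp
  moreover have "\<omega> (W t m None) \<le> 1"
    using unit t by (simp add: draws_in_unit_interval_def less_imp_le)
  ultimately show ?thesis unfolding wnorm_def by simp
qed

lemma aug_weight_ge_on_edge:
  assumes g: "digraph_on N E" and unit: "draws_in_unit_interval \<omega>" and t: "1 \<le> t"
    and heavy: "\<forall>j\<in>nodes N. \<forall>q\<in>insert None (Some ` nodes N). 1/2 \<le> \<omega> (W t j q)"
    and uv: "(u, v) \<in> aug_edges N E"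
  shows "1 / (2 * (real N + 1)) \<le> aug_weight E \<omega> t v u"
proof -
  have frac: "1 / (2 * (real N + 1)) \<le> a / wnorm E \<omega> t m" if "1/2 \<le> a" "m \<in> nodes N" for a m
  proof -
    have "0 < wnorm E \<omega> t m" "wnorm E \<omega> t m \<le> real N + 1"
      using wnorm_le[OF g unit t \<open>m \<in> nodes N\<close>] wnorm_pos[OF unit t] by auto
    then have "(1/2) / (real N + 1) \<le> a / wnorm E \<omega> t m"
      using \<open>1/2 \<le> a\<close> by (intro frac_le) auto
    then show ?thesis by simp
  qed
  from uv consider
      (alpha) m j where "u = (m, True)" "v = (j, True)" "m \<in> nodes N" "j \<in> nodes N" "j \<in> Nout E m \<union> {m}"
    | (to_beta) j where "u = (j, True)" "v = (j, False)" "j \<in> nodes N"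
    | (from_beta) j where "u = (j, False)" "v = (j, True)" "j \<in> nodes N"
    by (auto simp: aug_edges_def alpha_edges_def Nout_def)
  then show ?thesis
  proof cases
    case alpha
    then show ?thesis using frac heavy by (simp add: pw_def)
  next
    case to_beta
    then show ?thesis using frac heavy by (simp add: alw_def)
  next
    case from_beta
    then show ?thesis by simp
  qed
qed

lemma alpha_ratio_increment_tendsto_0:
  assumes g: "digraph_on N E" and unit: "draws_in_unit_interval \<omega>"
    and L: "\<forall>u\<in>aug_nodes N. \<forall>v\<in>aug_nodes N. (u, v) \<in> aug_edges N E ^^ L"
    and often: "infinite {t. 2 \<le> t \<and> heavy_window N \<omega> t L}"
    and i: "i \<in> nodes N"
  shows "(\<lambda>t. xa E x0 \<omega> 1 (Suc t) i / xa E x0 \<omega> 2 (Suc t) i - xa E x0 \<omega> 1 t i / xa E x0 \<omega> 2 t i)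
           \<longlonglongrightarrow> 0"
proof -
  interpret ratio_consensus "aug_nodes N" "aug_weight E \<omega>" "aug_state E x0 \<omega> 1" "aug_state E x0 \<omega> 2" 2
    using i aug_state_Suc[OF g] aug_weight_nonneg[OF unit] aug_weight_col_sum[OF unit g]
      aug_state2_pos[OF unit g]
    by unfold_locales (auto simp: aug_nodes_def)
  define \<delta> where "\<delta> = 1 / (2 * (real N + 1))"
  have "\<delta> ^ L \<le> trans_prod (aug_weight E \<omega>) (aug_nodes N) t L v u"
    if "2 \<le> t" "heavy_window N \<omega> t L" "u \<in> aug_nodes N" "v \<in> aug_nodes N" for t u v
  proof (rule trans_prod_ge_along_path[OF _ _ aug_edges_subset])
    fix s u v assume "t \<le> s" "s < t + L" "(u, v) \<in> aug_edges N E"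
    then show "\<delta> \<le> aug_weight E \<omega> s v u"
      unfolding \<delta>_def using that
      by (intro aug_weight_ge_on_edge[OF g unit])
         (auto simp: heavy_window_def dest!: spec[of _ "s - t"])
  qed (use that L aug_weight_nonneg[OF unit] in \<open>auto simp: \<delta>_def\<close>)
  then have "{t. 2 \<le> t \<and> heavy_window N \<omega> t L}
      \<subseteq> {t. 2 \<le> t \<and> (\<forall>v\<in>aug_nodes N. \<forall>u\<in>aug_nodes N. \<delta> ^ L \<le> trans_prod (aug_weight E \<omega>) (aug_nodes N) t L v u)}"
    by blast
  then have "(\<lambda>t. ratio (Suc t) (i, True) - ratio t (i, True)) \<longlonglongrightarrow> 0"
    using infinite_super[OF _ often] i
    by (intro ratio_increment_tendsto_0[of "\<delta> ^ L" L]) (auto simp: \<delta>_def aug_nodes_def)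
  then show ?thesis by (simp only: ratio_def aug_state_def fst_conv snd_conv if_True)
qed

section \<open>Inferring the initial value\<close>

definition obs_value :: "(obs \<Rightarrow> real option) \<Rightarrow> obs \<Rightarrow> real" where
  "obs_value I ob = the (I ob)"

definition net_inflow :: "(nat \<times> nat) set \<Rightarrow> nat \<Rightarrow> (obs \<Rightarrow> real option) \<Rightarrow> nat \<Rightarrow> nat \<Rightarrow> real" where
  "net_inflow E i I l k =
    (\<Sum>t<k. (\<Sum>j\<in>Nin E i. obs_value I (OP t i j) * obs_value I (OXa t j l))
          - (\<Sum>a\<in>Nout E i. obs_value I (OM t a i l)))"

text \<open>The ratio x^alpha_{i,1} / x^alpha_{i,2} is read off the two messages to an out-neighbour a,
  and net_inflow is the observed change of node i's mass x^alpha + x^beta.\<close>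

definition estimator :: "(nat \<times> nat) set \<Rightarrow> nat \<Rightarrow> nat \<Rightarrow> nat \<Rightarrow> (obs \<Rightarrow> real option) \<Rightarrow> real" where
  "estimator E i a k I =
    (obs_value I (OM k a i 1) / obs_value I (OM k a i 2) * (2 + net_inflow E i I 2 k)
      - net_inflow E i I 1 k) / 2"

lemma mass_balance_step:
  assumes g: "digraph_on N E" and i: "i \<in> nodes N" and wn: "wnorm E \<omega> t i \<noteq> 0"
  shows "xa E x0 \<omega> l (Suc t) i + xb E x0 \<omega> l (Suc t) i
       = xa E x0 \<omega> l t i + xb E x0 \<omega> l t i
         + ((\<Sum>j\<in>Nin E i. pw E \<omega> t i j * xa E x0 \<omega> l t j)
            - (\<Sum>a\<in>Nout E i. pw E \<omega> t a i * xa E x0 \<omega> l t i))"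
proof -
  let ?x = "xa E x0 \<omega> l t i"
  have "(\<Sum>a\<in>Nout E i. pw E \<omega> t a i) + pw E \<omega> t i i + alw E \<omega> t i = 1"
    using pw_col_sum[OF wn] finite_Nout[OF g i] not_in_Nout_self[OF g] by simp
  then have "(\<Sum>a\<in>Nout E i. pw E \<omega> t a i * ?x) + pw E \<omega> t i i * ?x + alw E \<omega> t i * ?x = ?x"
    by (metis distrib_right mult_1 sum_distrib_right)
  moreover have "(\<Sum>m\<in>Nin E i \<union> {i}. pw E \<omega> t i m * xa E x0 \<omega> l t m)
      = (\<Sum>j\<in>Nin E i. pw E \<omega> t i j * xa E x0 \<omega> l t j) + pw E \<omega> t i i * xa E x0 \<omega> l t i"
    using finite_Nin[OF g i] not_in_Nin_self[OF g] by simp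
  ultimately show ?thesis
    by (simp add: xa_Suc xb_Suc algebra_simps)
qed

lemma mass_balance:
  assumes g: "digraph_on N E" and i: "i \<in> nodes N" and wn: "\<And>t. t < k \<Longrightarrow> wnorm E \<omega> t i \<noteq> 0"
  shows "xa E x0 \<omega> l k i + xb E x0 \<omega> l k i
       = xa E x0 \<omega> l 0 i + xb E x0 \<omega> l 0 i
         + (\<Sum>t<k. (\<Sum>j\<in>Nin E i. pw E \<omega> t i j * xa E x0 \<omega> l t j)
                   - (\<Sum>a\<in>Nout E i. pw E \<omega> t a i * xa E x0 \<omega> l t i))"
  using wn by (induction k) (simp_all add: mass_balance_step[OF g i])

lemma obs_value_info:
  assumes "i \<in> nodes N" and "Nout E i \<union> Nin E i \<subseteq> A" and "t \<le> k" and "l \<in> {1, 2}"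
  shows "j \<in> Nin E i \<Longrightarrow> obs_value (info N E A x0 \<omega> k) (OP t i j) = pw E \<omega> t i j"
    and "j \<in> Nin E i \<Longrightarrow> obs_value (info N E A x0 \<omega> k) (OXa t j l) = xa E x0 \<omega> l t j"
    and "a \<in> Nout E i \<Longrightarrow> obs_value (info N E A x0 \<omega> k) (OM t a i l) = pw E \<omega> t a i * xa E x0 \<omega> l t i"
  using assms by (auto simp: obs_value_def info_def Nin_def Nout_def)

lemma net_inflow_info:
  assumes "i \<in> nodes N" and "Nout E i \<union> Nin E i \<subseteq> A" and "l \<in> {1, 2}"
  shows "net_inflow E i (info N E A x0 \<omega> k) l k
       = (\<Sum>t<k. (\<Sum>j\<in>Nin E i. pw E \<omega> t i j * xa E x0 \<omega> l t j)
                 - (\<Sum>a\<in>Nout E i. pw E \<omega> t a i * xa E x0 \<omega> l t i))"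
  unfolding net_inflow_def using obs_value_info[OF assms(1,2) _ assms(3)] by simp

lemma estimator_error:
  assumes g: "digraph_on N E" and unit: "draws_in_unit_interval \<omega>" and i: "i \<in> nodes N"
    and A: "Nout E i \<union> Nin E i \<subseteq> A" and a: "a \<in> Nout E i"
    and w0: "wnorm E \<omega> 0 i \<noteq> 0" and t: "1 \<le> t"
  shows "estimator E i a (Suc t) (info N E A x0 \<omega> (Suc t)) - x0 i
       = (xa E x0 \<omega> 1 (Suc t) i / xa E x0 \<omega> 2 (Suc t) i - xa E x0 \<omega> 1 t i / xa E x0 \<omega> 2 t i)
         * xb E x0 \<omega> 2 (Suc t) i / 2"
proof -
  define r where "r s = xa E x0 \<omega> 1 s i / xa E x0 \<omega> 2 s i" for s
  have wn: "wnorm E \<omega> s i \<noteq> 0" for s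
    using w0 wnorm_pos[OF unit, of s E i] by (cases s) auto
  have pos: "0 < xa E x0 \<omega> 2 s i" if "1 \<le> s" for s
    using xa2_pos_xb2_nonneg[OF unit g that] i by auto
  have "0 < pw E \<omega> (Suc t) a i"
    using pw_out_pos[OF unit _ a] by simp
  then have "obs_value (info N E A x0 \<omega> (Suc t)) (OM (Suc t) a i 1)
      / obs_value (info N E A x0 \<omega> (Suc t)) (OM (Suc t) a i 2) = r (Suc t)"
    using obs_value_info(3)[OF i A order.refl _ a] by (simp add: r_def)
  moreover have "2 + net_inflow E i (info N E A x0 \<omega> (Suc t)) 2 (Suc t)
      = xa E x0 \<omega> 2 (Suc t) i + xb E x0 \<omega> 2 (Suc t) i"
    "net_inflow E i (info N E A x0 \<omega> (Suc t)) 1 (Suc t)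
      = xa E x0 \<omega> 1 (Suc t) i + xb E x0 \<omega> 1 (Suc t) i - 2 * x0 i"
    using mass_balance[OF g i wn] net_inflow_info[OF i A]
    by (simp_all add: xa_0 xb_0 init_a_def init_b_def)
  moreover have "xa E x0 \<omega> 1 (Suc t) i = r (Suc t) * xa E x0 \<omega> 2 (Suc t) i"
    "xb E x0 \<omega> 1 (Suc t) i = r t * xb E x0 \<omega> 2 (Suc t) i"
    using pos[of "Suc t"] pos[OF t] by (simp_all add: r_def xb_Suc)
  ultimately show ?thesis
    unfolding estimator_def r_def[symmetric] by (simp add: field_simps)
qed

lemma estimator_tendsto:
  assumes g: "digraph_on N E" and unit: "draws_in_unit_interval \<omega>" and i: "i \<in> nodes N"
    and A: "Nout E i \<union> Nin E i \<subseteq> A" and a: "a \<in> Nout E i"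
    and w0: "wnorm E \<omega> 0 i \<noteq> 0"
    and L: "\<forall>u\<in>aug_nodes N. \<forall>v\<in>aug_nodes N. (u, v) \<in> aug_edges N E ^^ L"
    and often: "infinite {t. 2 \<le> t \<and> heavy_window N \<omega> t L}"
  shows "(\<lambda>k. estimator E i a k (info N E A x0 \<omega> k)) \<longlonglongrightarrow> x0 i"
proof -
  define d where "d t = xa E x0 \<omega> 1 (Suc t) i / xa E x0 \<omega> 2 (Suc t) i - xa E x0 \<omega> 1 t i / xa E x0 \<omega> 2 t i" for t
  define B where "B = (\<Sum>v\<in>aug_nodes N. aug_state E x0 \<omega> 2 1 v)"
  have "(\<lambda>t. \<bar>d t\<bar> * (B / 2)) \<longlonglongrightarrow> 0"
    using alpha_ratio_increment_tendsto_0[OF g unit L often i]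
    by (intro tendsto_mult_left_zero tendsto_rabs_zero) (simp add: d_def)
  then have "(\<lambda>t. estimator E i a (Suc t) (info N E A x0 \<omega> (Suc t)) - x0 i) \<longlonglongrightarrow> 0"
  proof (rule Lim_null_comparison[rotated])
    show "\<forall>\<^sub>F t in sequentially.
        norm (estimator E i a (Suc t) (info N E A x0 \<omega> (Suc t)) - x0 i) \<le> \<bar>d t\<bar> * (B / 2)"
      using eventually_ge_at_top[of 1]
    proof eventually_elim
      case (elim t)
      have "0 \<le> xb E x0 \<omega> 2 (Suc t) i" "xb E x0 \<omega> 2 (Suc t) i \<le> B"
        using xa2_pos_xb2_nonneg[OF unit g, of "Suc t"] xb2_le_total_mass[OF unit g _ i] i
        by (auto simp: B_def)
      moreover have "norm (estimator E i a (Suc t) (info N E A x0 \<omega> (Suc t)) - x0 i)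
          = \<bar>d t\<bar> * xb E x0 \<omega> 2 (Suc t) i / 2"
        unfolding estimator_error[OF g unit i A a w0 elim] d_def
        using calculation(1) by (simp add: abs_mult)
      ultimately show ?case by (simp add: mult_left_mono)
    qed
  qed
  from tendsto_add[OF this tendsto_const[of "x0 i"]] show ?thesis
    by (intro LIMSEQ_imp_Suc[where f = "\<lambda>k. estimator E i a k (info N E A x0 \<omega> k)"]) simp
qed

section \<open>Almost sure properties of the random draws\<close>

lemma (in prob_space) AE_infinitely_many_indep_events:
  fixes P :: "nat \<Rightarrow> 'a \<Rightarrow> bool"
  assumes indep: "indep_events (\<lambda>m. {x\<in>space M. P m x}) UNIV"
    and "0 < q" and q: "\<And>m. q \<le> prob {x\<in>space M. P m x}"
  shows "AE x in M. infinite {m. P m x}"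
proof -
  define G where "G m = {x\<in>space M. P m x}" for m
  define U where "U n = (\<Union>m\<in>{n..}. G m)" for n
  have G: "G m \<in> events" for m
    using indep by (auto simp: indep_events_def G_def)
  have U: "range U \<subseteq> events"
    using G by (auto simp: U_def)
  have "(\<lambda>n. prob (U n)) \<longlonglongrightarrow> prob (\<Inter>n. U n)"
    using U by (intro finite_Lim_measure_decseq) (auto simp: decseq_def U_def intro: order_trans)
  moreover have "q \<le> prob (U n)" for n
    using q[of n] finite_measure_mono[of "G n" "U n"] U by (fastforce simp: U_def G_def)
  ultimately have "q \<le> prob (\<Inter>n. U n)"
    by (intro LIMSEQ_le_const) auto
  then have "prob (\<Inter>n. U n) = 1"
    using borel_0_1_law[OF indep[folded G_def]] \<open>0 < q\<close> by (auto simp: U_def)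
  then have "AE x in M. x \<in> (\<Inter>n. U n)"
    using U by (subst (asm) prob_eq_1) auto
  then show ?thesis
    by (rule eventually_mono) (auto simp: U_def G_def infinite_nat_iff_unbounded_le)
qed

lemma (in product_prob_space) prob_PiM_Collect:
  assumes "J \<subseteq> I" "finite J" "\<And>d. d \<in> J \<Longrightarrow> B d \<in> sets (M d)"
  shows "P.prob {x\<in>space (Pi\<^sub>M I M). \<forall>d\<in>J. x d \<in> B d} = (\<Prod>d\<in>J. M.prob d (B d))"
proof -
  have "ennreal (P.prob {x\<in>space (Pi\<^sub>M I M). \<forall>d\<in>J. x d \<in> B d}) = (\<Prod>d\<in>J. ennreal (M.prob d (B d)))"
    using emeasure_PiM_Collect[OF assms] by (simp add: P.emeasure_eq_measure M.emeasure_eq_measure)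
  then show ?thesis by (simp add: prod_ennreal prod_nonneg)
qed

lemma (in product_prob_space) indep_events_PiM_Collect:
  assumes J: "\<And>m. J m \<subseteq> I" "\<And>m. finite (J m)" "disjoint_family J"
    and B: "\<And>d. d \<in> I \<Longrightarrow> B d \<in> sets (M d)"
  shows "P.indep_events (\<lambda>m. {x\<in>space (Pi\<^sub>M I M). \<forall>d\<in>J m. x d \<in> B d}) UNIV"
proof (rule P.indep_eventsI)
  fix m
  show "{x\<in>space (Pi\<^sub>M I M). \<forall>d\<in>J m. x d \<in> B d} \<in> P.events"
    using J B by (intro sets.sets_Collect_finite_All) (auto intro!: sets_Collect_single)
next
  fix K :: "'b set" assume K: "finite K" "K \<noteq> {}"
  have "(\<Inter>m\<in>K. {x\<in>space (Pi\<^sub>M I M). \<forall>d\<in>J m. x d \<in> B d})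
      = {x\<in>space (Pi\<^sub>M I M). \<forall>d\<in>(\<Union>m\<in>K. J m). x d \<in> B d}"
    using K by auto
  also have "P.prob \<dots> = (\<Prod>d\<in>(\<Union>m\<in>K. J m). M.prob d (B d))"
    using J B K by (intro prob_PiM_Collect) auto
  also have "\<dots> = (\<Prod>m\<in>K. \<Prod>d\<in>J m. M.prob d (B d))"
    using J K by (intro prod.UNION_disjoint) (auto simp: disjoint_family_on_def)
  also have "\<dots> = (\<Prod>m\<in>K. P.prob {x\<in>space (Pi\<^sub>M I M). \<forall>d\<in>J m. x d \<in> B d})"
    using J B by (intro prod.cong refl prob_PiM_Collect[symmetric]) auto
  finally show "P.prob (\<Inter>m\<in>K. {x\<in>space (Pi\<^sub>M I M). \<forall>d\<in>J m. x d \<in> B d})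
      = (\<Prod>m\<in>K. P.prob {x\<in>space (Pi\<^sub>M I M). \<forall>d\<in>J m. x d \<in> B d})" .
qed

lemma AE_PiM_component_neq:
  fixes M :: "'i \<Rightarrow> real measure" and g :: "('i \<Rightarrow> real) \<Rightarrow> real"
  assumes M: "\<And>i. i \<in> I \<Longrightarrow> prob_space (M i)" and d: "d \<in> I"
    and borel: "sets (M d) = sets borel" and atomless: "\<And>c. AE x in M d. x \<noteq> c"
    and g: "g \<in> borel_measurable (Pi\<^sub>M (I - {d}) M)"
  shows "AE \<omega> in Pi\<^sub>M I M. \<omega> d \<noteq> g (restrict \<omega> (I - {d}))"
proof -
  let ?J = "I - {d}"
  interpret Md: prob_space "M d" using M d .
  interpret MJ: prob_space "Pi\<^sub>M ?J M" using M by (intro prob_space_PiM) auto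
  interpret pair_sigma_finite "M d" "Pi\<^sub>M ?J M" ..
  have [measurable]: "fst \<in> borel_measurable (M d \<Otimes>\<^sub>M Pi\<^sub>M ?J M)"
    using measurable_fst[of "M d" "Pi\<^sub>M ?J M"] by (simp add: measurable_cong_sets[OF refl borel])
  have [measurable]: "{z \<in> space (M d \<Otimes>\<^sub>M Pi\<^sub>M ?J M). fst z \<noteq> g (snd z)} \<in> sets (M d \<Otimes>\<^sub>M Pi\<^sub>M ?J M)"
    using g by measurable
  have "AE x in M d. AE X in Pi\<^sub>M ?J M. x \<noteq> g X"
    using AE_commute[of "\<lambda>x X. x \<noteq> g X"] atomless by simp
  then have pair: "AE z in M d \<Otimes>\<^sub>M Pi\<^sub>M ?J M. fst z \<noteq> g (snd z)"
    by (intro AE_pair_measure) simp_all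
  have I: "insert d ?J = I" using d by auto
  have "(\<lambda>(x, X). X(d := x)) \<in> measurable (M d \<Otimes>\<^sub>M Pi\<^sub>M ?J M) (Pi\<^sub>M (insert d ?J) M)"
    by measurable
  note this[unfolded I, measurable] g[measurable]
  have coord: "(\<lambda>\<omega>. \<omega> d) \<in> borel_measurable (Pi\<^sub>M I M)"
    using measurable_component_singleton[OF d, of M] by (simp add: measurable_cong_sets[OF refl borel])
  have rest: "(\<lambda>\<omega>. g (restrict \<omega> ?J)) \<in> borel_measurable (Pi\<^sub>M I M)"
    by (rule measurable_compose[OF _ g]) (rule measurable_restrict_subset, auto)
  have [measurable]: "{\<omega> \<in> space (Pi\<^sub>M I M). \<omega> d \<noteq> g (restrict \<omega> ?J)} \<in> sets (Pi\<^sub>M I M)"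
    using measurable_equality_set[OF coord rest] by (rule sets.sets_Collect_neg)
  have "AE z in M d \<Otimes>\<^sub>M Pi\<^sub>M ?J M. ((snd z)(d := fst z)) d \<noteq> g (restrict ((snd z)(d := fst z)) ?J)"
    using pair AE_space
  proof eventually_elim
    case (elim z)
    then have "snd z \<in> space (Pi\<^sub>M ?J M)" by (simp add: space_pair_measure mem_Times_iff)
    then show ?case using elim(1) by (simp add: space_PiM)
  qed
  then have "AE \<omega> in distr (M d \<Otimes>\<^sub>M Pi\<^sub>M ?J M) (Pi\<^sub>M I M) (\<lambda>(x, X). X(d := x)).
      \<omega> d \<noteq> g (restrict \<omega> ?J)"
    by (subst AE_distr_iff) (auto simp: split_beta)
  also have "distr (M d \<Otimes>\<^sub>M Pi\<^sub>M ?J M) (Pi\<^sub>M I M) (\<lambda>(x, X). X(d := x)) = Pi\<^sub>M I M"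
    using distr_pair_PiM_eq_PiM[of ?J M d] M d by (simp add: insert_absorb)
  finally show ?thesis .
qed

lemma draw_distr_W_0: "draw_distr M (W 0 j q) = density lborel (normal_density 0 (sqrt M))"
  by (simp add: draw_distr_def)

lemma draw_distr_W_pos: "1 \<le> t \<Longrightarrow> draw_distr M (W t j q) = uniform_measure lborel {0<..<1}"
  by (simp add: draw_distr_def)

lemma prob_space_draw_distr: "0 < M \<Longrightarrow> prob_space (draw_distr M d)"
proof (cases d)
  case (W k j q)
  assume "0 < M"
  then show ?thesis
    using W prob_space_normal_density[of "sqrt M" 0]
    by (auto simp: draw_distr_def intro!: prob_space_uniform_measure)
qed (auto simp: draw_distr_def intro!: prob_space_uniform_measure)

lemma sets_draw_distr [measurable_cong]: "sets (draw_distr M d) = sets borel"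
  by (cases d) (auto simp: draw_distr_def)

lemma AE_pp_space_component:
  "0 < M \<Longrightarrow> AE x in draw_distr M d. P x \<Longrightarrow> AE \<omega> in pp_space M. P (\<omega> d)"
  unfolding pp_space_def by (rule AE_PiM_component) (auto intro: prob_space_draw_distr)

lemma AE_draws_in_unit_interval:
  assumes "0 < M"
  shows "AE \<omega> in pp_space M. draws_in_unit_interval \<omega>"
proof -
  have "AE \<omega> in pp_space M. 1 \<le> t \<longrightarrow> 0 < \<omega> (W t j q) \<and> \<omega> (W t j q) < 1" for t j q
  proof (cases "1 \<le> t")
    case True
    have "AE x in uniform_measure lborel {0<..<1::real}. 0 < x \<and> x < 1"
      by (subst AE_uniform_measure) auto
    then have "AE x in draw_distr M (W t j q). 0 < x \<and> x < 1"
      unfolding draw_distr_W_pos[OF True] .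
    then show ?thesis
      by (auto dest: AE_pp_space_component[OF assms] elim: eventually_mono)
  qed simp
  then show ?thesis
    unfolding draws_in_unit_interval_def by (simp add: AE_all_countable)
qed

text \<open>At time 0 the raw weights are Gaussian, so the normaliser of node i could vanish, making
  all its weights junk (x / 0 = 0); this happens only on a null set because the raw draw for
  alpha_i(0) is independent of the others and atomless.\<close>

lemma AE_wnorm_0_nonzero:
  assumes "0 < M"
  shows "AE \<omega> in pp_space M. wnorm E \<omega> 0 i \<noteq> 0"
proof -
  define d where "d = W 0 i None"
  define g where "g X = - (\<Sum>j\<in>Nout E i \<union> {i}. X (W 0 i (Some j)))" for X :: "draw \<Rightarrow> real"
  have "g \<in> borel_measurable (Pi\<^sub>M (UNIV - {d}) (draw_distr M))"
    unfolding g_def d_def by measurable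
  moreover have "AE x in draw_distr M d. x \<noteq> c" for c
  proof -
    have "AE x in lborel. x \<noteq> c" by (rule AE_lborel_singleton)
    then have "AE x in density lborel (normal_density 0 (sqrt M)). x \<noteq> c"
      by (subst AE_density) (auto elim: eventually_mono)
    then show ?thesis unfolding d_def draw_distr_W_0 .
  qed
  ultimately have "AE \<omega> in pp_space M. \<omega> d \<noteq> g (restrict \<omega> (UNIV - {d}))"
    unfolding pp_space_def using prob_space_draw_distr[OF assms]
    by (intro AE_PiM_component_neq) (auto simp: sets_draw_distr)
  then show ?thesis
    by (rule eventually_mono) (auto simp: wnorm_def g_def d_def)
qed

definition window_draws :: "nat \<Rightarrow> nat \<Rightarrow> nat \<Rightarrow> draw set" where
  "window_draws N t L = (\<lambda>(s, j, q). W (t + s) j q) ` ({..<L} \<times> nodes N \<times> insert None (Some ` nodes N))"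

lemma heavy_window_iff: "heavy_window N \<omega> t L \<longleftrightarrow> (\<forall>d\<in>window_draws N t L. 1/2 \<le> \<omega> d)"
  by (auto simp: heavy_window_def window_draws_def)

lemma card_window_draws: "card (window_draws N t L) \<le> L * (N * (N + 1))"
proof -
  have "card (window_draws N t L) \<le> card ({..<L} \<times> nodes N \<times> insert None (Some ` nodes N))"
    unfolding window_draws_def by (rule card_image_le) simp
  also have "\<dots> \<le> L * (N * (N + 1))"
    by (simp add: card_cartesian_product card_image nodes_def card_insert_le)
  finally show ?thesis .
qed

lemma prob_draw_ge_half:
  assumes "1 \<le> t"
  shows "measure (draw_distr M (W t j q)) {1/2..} = 1/2"
proof -
  have "{0<..<1::real} \<inter> {1/2..} = {1/2..<1}" by auto
  then have "emeasure (draw_distr M (W t j q)) {1/2..} = ennreal (1/2)"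
    unfolding draw_distr_W_pos[OF assms] by (simp add: divide_ennreal_def)
  then show ?thesis unfolding measure_def by (simp del: ennreal_half)
qed

lemma window_draws_disjoint: "t + L \<le> t' \<Longrightarrow> window_draws N t L \<inter> window_draws N t' L' = {}"
  by (auto simp: window_draws_def)

lemma prob_heavy_window:
  assumes M: "0 < M" and t: "1 \<le> t"
  shows "measure (pp_space M) {\<omega>\<in>space (pp_space M). \<forall>d\<in>window_draws N t L. \<omega> d \<in> {1/2..}}
    = (1/2) ^ card (window_draws N t L)"
proof -
  interpret M: prob_space "draw_distr M d" for d
    by (rule prob_space_draw_distr[OF M])
  interpret product_prob_space "draw_distr M" UNIV ..
  have "measure (pp_space M) {\<omega>\<in>space (pp_space M). \<forall>d\<in>window_draws N t L. \<omega> d \<in> {1/2..}}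
      = (\<Prod>d\<in>window_draws N t L. measure (draw_distr M d) {1/2..})"
    unfolding pp_space_def by (intro prob_PiM_Collect) (auto simp: window_draws_def)
  also have "\<dots> = (\<Prod>d\<in>window_draws N t L. 1/2)"
    using t by (intro prod.cong) (auto simp: window_draws_def prob_draw_ge_half)
  finally show ?thesis by simp
qed

text \<open>Windows of length L starting at 2 + m (L + 1) use disjoint sets of draws, so the events
  that they are heavy are independent, each with probability at least 2^{-L N (N + 1)}.\<close>

lemma AE_infinitely_many_heavy_windows:
  assumes M: "0 < M"
  shows "AE \<omega> in pp_space M. infinite {t. 2 \<le> t \<and> heavy_window N \<omega> t L}"
proof -
  interpret M: prob_space "draw_distr M d" for d
    by (rule prob_space_draw_distr[OF M])
  interpret product_prob_space "draw_distr M" UNIV ..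
  define T where "T m = 2 + m * Suc L" for m
  define H where "H m = {\<omega>\<in>space (pp_space M). \<forall>d\<in>window_draws N (T m) L. \<omega> d \<in> {1/2..}}" for m
  have T_gap: "T m + L \<le> T m'" if "m < m'" for m m'
  proof -
    have "Suc m * Suc L \<le> m' * Suc L" using that by (intro mult_le_mono1) simp
    then show ?thesis by (simp add: T_def)
  qed
  have "disjoint_family (\<lambda>m. window_draws N (T m) L)"
    unfolding disjoint_family_on_def
    by (metis Int_commute T_gap linorder_neqE_nat window_draws_disjoint)
  then have "P.indep_events H UNIV"
    unfolding H_def pp_space_def by (intro indep_events_PiM_Collect) (auto simp: window_draws_def)
  moreover have "(1/2) ^ (L * (N * (N + 1))) \<le> P.prob (H m)" for m
    using prob_heavy_window[OF M, of "T m" N L] card_window_draws[of N "T m" L]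
    by (simp add: H_def T_def pp_space_def power_decreasing)
  ultimately have "AE \<omega> in pp_space M. infinite {m. \<omega> \<in> H m}"
    unfolding H_def pp_space_def
    by (intro P.AE_infinitely_many_indep_events[where q = "(1/2) ^ (L * (N * (N + 1)))"]) auto
  then show ?thesis
  proof (rule eventually_mono)
    fix \<omega> :: "draw \<Rightarrow> real" assume "infinite {m. \<omega> \<in> H m}"
    moreover have "inj T" by (simp add: inj_def T_def del: mult_Suc_right)
    ultimately have "infinite (T ` {m. \<omega> \<in> H m})"
      by (simp add: finite_image_iff inj_on_subset)
    moreover have "T ` {m. \<omega> \<in> H m} \<subseteq> {t. 2 \<le> t \<and> heavy_window N \<omega> t L}"
      by (auto simp: H_def T_def heavy_window_iff)
    ultimately show "infinite {t. 2 \<le> t \<and> heavy_window N \<omega> t L}"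
      by (rule infinite_super[rotated])
  qed
qed

lemma Nout_nonempty:
  assumes "2 \<le> N" and "strongly_connected N E" and "i \<in> nodes N"
  shows "Nout E i \<noteq> {}"
proof -
  define v where "v = (if i = 1 then 2 else (1::nat))"
  have v: "v \<in> nodes N" "v \<noteq> i"
    using assms(1,3) by (auto simp: v_def nodes_def)
  then have "(v, i) \<in> E\<^sup>*"
    using assms(2,3) by (auto simp: strongly_connected_def)
  then show ?thesis
    using v(2) by (cases rule: rtranclE) (auto simp: Nout_def)
qed

theorem theorem3:
  fixes N :: nat and E :: "(nat \<times> nat) set" and M :: real and A :: "nat set" and i :: nat
  assumes "N > 2"
    and "digraph_on N E"
    and "strongly_connected N E"
    and "M > 0"
    and "A \<subseteq> nodes N"
    and "i \<in> nodes N" and "i \<notin> A"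
    and "Nout E i \<union> Nin E i \<subseteq> A"
  shows "\<exists>F :: nat \<Rightarrow> (obs \<Rightarrow> real option) \<Rightarrow> real.
           \<forall>x0 :: nat \<Rightarrow> real.
             AE \<omega> in pp_space M. (\<lambda>k. F k (info N E A x0 \<omega> k)) \<longlonglongrightarrow> x0 i"
proof -
  obtain a where a: "a \<in> Nout E i"
    using Nout_nonempty[of N E i] assms(1,3,6) by fastforce
  obtain L where L: "\<forall>u\<in>aug_nodes N. \<forall>v\<in>aug_nodes N. (u, v) \<in> aug_edges N E ^^ L"
    using aug_edges_uniform_paths[OF assms(2,3)] by blast
  have "AE \<omega> in pp_space M. (\<lambda>k. estimator E i a k (info N E A x0 \<omega> k)) \<longlonglongrightarrow> x0 i" for x0
    using AE_draws_in_unit_interval[OF assms(4)] AE_wnorm_0_nonzero[OF assms(4), of E i]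
      AE_infinitely_many_heavy_windows[OF assms(4), of N L]
    by eventually_elim (rule estimator_tendsto[OF assms(2) _ assms(6,8) a _ L])
  then show ?thesis by blast
qed

end
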